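(* Let $(B,\lfloor\cdot,\cdot\rfloor,\|\cdot\|)$ be an SSDB space, $q(b):=\tfrac12\lfloor b,b\rfloor$, $g_0:=\tfrac12\|\cdot\|^2$. Then: (a) if $f$ is a BC--function on $B$ then ${\cal P}_q(f)-{\cal N}_q(g_0)=B$; (b) if $A$ is a $q$--positive subset of $B$ with $A-{\cal N}_q(g_0)=B$, then $A$ is maximally $q$--positive; (c) if $f$ is a BC--function on $B$ then ${\cal P}_q(f)$ is maximally $q$--positive and ${\cal P}_q(f^@)={\cal P}_q(f)$; (d) if $A$ is a $q$--positive subset of $B$, then $A$ is maximally $q$--positive if and only if $A-{\cal N}_q(g_0)=B$.
   Context: An SSDB space is a triple $(B,\lfloor\cdot,\cdot\rfloor,\|\cdot\|)$ where $B$ is a nonzero real vector space, $\lfloor\cdot,\cdot\rfloor$ a symmetric bilinear form on $B$, $(B,\|\cdot\|)$ a Banach space, and there is a linear isometry $\iota$ of $B$ onto its dual $B^*$ with $\langle b,\iota(c)\rangle=\lfloor b,c\rfloor$ for all $b,c$. For proper convex $f\colon B\to\,]{-}\infty,\infty]$, $f^@(c):=\sup_{b\in B}[\lfloor b,c\rfloor-f(b)]$. A BC--function is a proper convex $f$ with $f^@(b)\ge f(b)\ge q(b)$ for all $b$. ${\cal P}_q(h):=\{b\colon h(b)=q(b)\}$ for $h\ge q$, ${\cal N}_q(h):=\{b\colon h(b)=-q(b)\}$ for $h\ge -q$. $A$ is $q$--positive if $A\ne\emptyset$ and $q(b-c)\ge0$ for all $b,c\in A$; maximally $q$--positive if moreover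 it is not properly contained in another $q$--positive set. *)

theory Defs
  imports "HOL-Analysis.Analysis"
begin

text \<open>SSDB space: the Banach space is the real Banach space type 'b (norm = type norm);
  bf is the symmetric bilinear form; iota c = (\<lambda>b. bf b c) is a linear isometry of 'b
  onto its (continuous) dual.\<close>
definition SSDB :: "('b::banach \<Rightarrow> 'b \<Rightarrow> real) \<Rightarrow> bool" where
  "SSDB bf \<longleftrightarrow> (\<exists>b::'b. b \<noteq> 0) \<and> bilinear bf \<and> (\<forall>b c. bf b c = bf c b)
     \<and> (\<forall>c. bounded_linear (\<lambda>b. bf b c) \<and> onorm (\<lambda>b. bf b c) = norm c)
     \<and> (\<forall>\<phi>::'b \<Rightarrow> real. bounded_linear \<phi> \<longrightarrow> (\<exists>c. \<forall>b. \<phi> b = bf b c))"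

definition qf :: "('b::banach \<Rightarrow> 'b \<Rightarrow> real) \<Rightarrow> 'b \<Rightarrow> real" where
  "qf bf b = bf b b / 2"

definition g0 :: "'b::banach \<Rightarrow> ereal" where
  "g0 b = ereal (norm b ^ 2 / 2)"

definition proper_convex :: "('b::banach \<Rightarrow> ereal) \<Rightarrow> bool" where
  "proper_convex f \<longleftrightarrow> (\<forall>b. f b \<noteq> -\<infinity>) \<and> (\<exists>b. f b \<noteq> \<infinity>)
     \<and> convex {(b, r::real). f b \<le> ereal r}"

definition fconj :: "('b::banach \<Rightarrow> 'b \<Rightarrow> real) \<Rightarrow> ('b \<Rightarrow> ereal) \<Rightarrow> 'b \<Rightarrow> ereal" where
  "fconj bf f c = (SUP b. ereal (bf b c) - f b)"

definition BC_function :: "('b::banach \<Rightarrow> 'b \<Rightarrow> real) \<Rightarrow> ('b \<Rightarrow> ereal) \<Rightarrow> bool" where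
  "BC_function bf f \<longleftrightarrow> proper_convex f
     \<and> (\<forall>b. fconj bf f b \<ge> f b \<and> f b \<ge> ereal (qf bf b))"

definition Pq :: "('b::banach \<Rightarrow> 'b \<Rightarrow> real) \<Rightarrow> ('b \<Rightarrow> ereal) \<Rightarrow> 'b set" where
  "Pq bf h = {b. h b = ereal (qf bf b)}"

definition Nq :: "('b::banach \<Rightarrow> 'b \<Rightarrow> real) \<Rightarrow> ('b \<Rightarrow> ereal) \<Rightarrow> 'b set" where
  "Nq bf h = {b. h b = ereal (- qf bf b)}"

definition mdiff :: "'b::banach set \<Rightarrow> 'b set \<Rightarrow> 'b set" where
  "mdiff A C = {a - c | a c. a \<in> A \<and> c \<in> C}"

definition q_positive :: "('b::banach \<Rightarrow> 'b \<Rightarrow> real) \<Rightarrow> 'b set \<Rightarrow> bool" where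
  "q_positive bf A \<longleftrightarrow> A \<noteq> {} \<and> (\<forall>b\<in>A. \<forall>c\<in>A. qf bf (b - c) \<ge> 0)"

definition max_q_positive :: "('b::banach \<Rightarrow> 'b \<Rightarrow> real) \<Rightarrow> 'b set \<Rightarrow> bool" where
  "max_q_positive bf A \<longleftrightarrow> q_positive bf A
     \<and> (\<forall>A'. q_positive bf A' \<and> A \<subseteq> A' \<longrightarrow> A' = A)"

end

theory Submission
  imports Defs
begin

text \<open>
  Note \<open>q + g0 \<ge> 0\<close>, with equality exactly on \<open>N\<^sub>q(g0)\<close>. Let \<open>\<phi> \<ge> q\<close> be convex on a convex
  set \<open>D\<close> and fix \<open>d\<close>. The function \<open>(x, y) \<mapsto> \<phi> y - q y + q (y - d) + \<parallel>y - d - x\<parallel>\<^sup>2/2\<close>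
  is jointly convex and nonnegative at \<open>x = 0\<close>, so a Hahn--Banach argument gives a linear
  minorant in \<open>x\<close>; it is bounded, hence of the form \<open>\<lfloor>\<cdot>, c\<rfloor>\<close>, and since \<open>g0\<close> is its own
  conjugate, \<open>e = d + c\<close> satisfies \<open>(q + g0)(c) \<le> \<phi> y - q y + q (y - e)\<close> on \<open>D\<close>.
  For a BC-function \<open>f\<close> take \<open>\<phi> = f\<close>: this reads \<open>f\<^sup>@(e) \<le> q(e) - (q + g0)(c)\<close>, and
  \<open>q \<le> f \<le> f\<^sup>@\<close> forces \<open>c \<in> N\<^sub>q(g0)\<close> and \<open>e \<in> P\<^sub>q(f)\<close>. For a maximally \<open>q\<close>-positive \<open>A\<close> take
  for \<open>\<phi>\<close> the supremum of the tangents \<open>y \<mapsto> \<lfloor>a, y\<rfloor> - q a\<close>, \<open>a \<in> A\<close>: the inequality makes \<open>e\<close>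
  \<open>q\<close>-positively related to \<open>A\<close>, so \<open>e \<in> A\<close>, and \<open>y = e\<close> gives \<open>c \<in> N\<^sub>q(g0)\<close>.
  At a point of \<open>P\<^sub>q(f)\<close> the tangent of \<open>q\<close> minorizes \<open>f\<close> (compare \<open>q\<close> and \<open>f\<close> along segments),
  which yields \<open>q\<close>-positivity of \<open>P\<^sub>q(f)\<close> and \<open>f\<^sup>@ = q\<close> there. Finally, if \<open>A - N\<^sub>q(g0) = B\<close>,
  a point related to \<open>A\<close> is \<open>a - c\<close> with \<open>q(c) \<ge> 0\<close> and \<open>(q + g0)(c) = 0\<close>, so \<open>c = 0\<close>.
\<close>

section \<open>Linear minorants of jointly convex functions\<close>

text \<open>Graphs of linear functionals on subspaces; Zorn's lemma over those dominated by \<open>F\<close> is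
  the Hahn--Banach argument.\<close>
definition linear_graph :: "('a::real_vector \<times> real) set \<Rightarrow> bool" where
  "linear_graph G \<longleftrightarrow> (0, 0) \<in> G \<and> (\<forall>p\<in>G. \<forall>q\<in>G. p + q \<in> G) \<and> (\<forall>p\<in>G. \<forall>t. t *\<^sub>R p \<in> G)
     \<and> (\<forall>x a b. (x, a) \<in> G \<longrightarrow> (x, b) \<in> G \<longrightarrow> a = b)"

definition dominated_linear_graph ::
    "('a::real_vector \<Rightarrow> 'c \<Rightarrow> real) \<Rightarrow> 'c set \<Rightarrow> ('a \<times> real) set \<Rightarrow> bool" where
  "dominated_linear_graph F D G \<longleftrightarrow> linear_graph G \<and> (\<forall>x a. (x, a) \<in> G \<longrightarrow> (\<forall>y\<in>D. a \<le> F x y))"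

lemma linear_graphD:
  assumes "linear_graph G"
  shows linear_graph_zero: "(0, 0) \<in> G"
    and linear_graph_add: "p \<in> G \<Longrightarrow> q \<in> G \<Longrightarrow> p + q \<in> G"
    and linear_graph_scaleR: "p \<in> G \<Longrightarrow> t *\<^sub>R p \<in> G"
    and linear_graph_unique: "(x, a) \<in> G \<Longrightarrow> (x, b) \<in> G \<Longrightarrow> a = b"
  using assms unfolding linear_graph_def by blast+

lemma dominated_linear_graphD:
  assumes "dominated_linear_graph F D G"
  shows dominated_linear_graph_linear: "linear_graph G"
    and dominated_linear_graph_le: "(x, a) \<in> G \<Longrightarrow> y \<in> D \<Longrightarrow> a \<le> F x y"
  using assms unfolding dominated_linear_graph_def by blast+

lemma dominated_linear_graph_slope_le:
  assumes F: "convex_on (UNIV \<times> D) (\<lambda>(x, y). F x y)" and G: "dominated_linear_graph F D G"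
    and mem: "(m, a) \<in> G" "(m', a') \<in> G" and st: "s > 0" "t > 0" and y: "y \<in> D" "y' \<in> D"
  shows "(a' - F (m' - s *\<^sub>R x0) y') / s \<le> (F (m + t *\<^sub>R x0) y - a) / t"
proof -
  note lin = dominated_linear_graph_linear[OF G]
  define l where "l = s / (s + t)"
  have l: "0 \<le> l" "l \<le> 1" "1 - l = t / (s + t)" using st by (auto simp: l_def field_simps)
  have point: "(1 - l) *\<^sub>R (m' - s *\<^sub>R x0) + l *\<^sub>R (m + t *\<^sub>R x0) = (1 - l) *\<^sub>R m' + l *\<^sub>R m"
    using st unfolding l(3) by (simp add: l_def algebra_simps scaleR_add_right scaleR_diff_right)
  have "((1 - l) *\<^sub>R m' + l *\<^sub>R m, (1 - l) * a' + l * a) \<in> G"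
    using linear_graph_add[OF lin linear_graph_scaleR[OF lin mem(2)] linear_graph_scaleR[OF lin mem(1)]]
    by simp
  moreover have "(1 - l) *\<^sub>R y' + l *\<^sub>R y \<in> D"
    using convexD_alt[OF convex_on_imp_convex[OF F], of "(m', y')" "(m, y)" l] y l by auto
  ultimately have "(1 - l) * a' + l * a \<le> F ((1 - l) *\<^sub>R m' + l *\<^sub>R m) ((1 - l) *\<^sub>R y' + l *\<^sub>R y)"
    using dominated_linear_graph_le[OF G] by blast
  also have "\<dots> \<le> (1 - l) * F (m' - s *\<^sub>R x0) y' + l * F (m + t *\<^sub>R x0) y"
    using convex_onD[OF F l(1,2), of "(m' - s *\<^sub>R x0, y')" "(m + t *\<^sub>R x0, y)"] y point by simp
  finally have "(t * a' + s * a) / (s + t) \<le> (t * F (m' - s *\<^sub>R x0) y' + s * F (m + t *\<^sub>R x0) y) / (s + t)"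
    unfolding l(3) by (simp add: l_def add_divide_distrib)
  then have "t * a' + s * a \<le> t * F (m' - s *\<^sub>R x0) y' + s * F (m + t *\<^sub>R x0) y"
    using st by (simp add: divide_le_cancel)
  then show ?thesis using st by (simp add: field_simps)
qed

lemma linear_graph_adjoin:
  assumes G: "linear_graph G" and x0: "\<And>a. (x0, a) \<notin> G"
  shows "linear_graph {(m + t *\<^sub>R x0, a + t * c) | m a t. (m, a) \<in> G}" (is "linear_graph ?G'")
  unfolding linear_graph_def
proof (intro conjI ballI allI impI)
  show "(0, 0) \<in> ?G'" using linear_graph_zero[OF G] by force
next
  fix p q assume "p \<in> ?G'" "q \<in> ?G'"
  then obtain m1 a1 t1 m2 a2 t2 where "p = (m1 + t1 *\<^sub>R x0, a1 + t1 * c)" "(m1, a1) \<in> G"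
    "q = (m2 + t2 *\<^sub>R x0, a2 + t2 * c)" "(m2, a2) \<in> G" by blast
  then have "p + q = ((m1 + m2) + (t1 + t2) *\<^sub>R x0, (a1 + a2) + (t1 + t2) * c) \<and> (m1 + m2, a1 + a2) \<in> G"
    using linear_graph_add[OF G, of "(m1, a1)" "(m2, a2)"] by (simp add: algebra_simps)
  then show "p + q \<in> ?G'" by blast
next
  fix p t assume "p \<in> ?G'"
  then obtain m a u where "p = (m + u *\<^sub>R x0, a + u * c)" "(m, a) \<in> G" by blast
  then have "t *\<^sub>R p = (t *\<^sub>R m + (t * u) *\<^sub>R x0, t * a + (t * u) * c) \<and> (t *\<^sub>R m, t * a) \<in> G"
    using linear_graph_scaleR[OF G, of "(m, a)" t] by (simp add: algebra_simps)
  then show "t *\<^sub>R p \<in> ?G'" by blast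
next
  fix x a b assume "(x, a) \<in> ?G'" "(x, b) \<in> ?G'"
  then obtain m1 a1 t1 m2 a2 t2 where e: "x = m1 + t1 *\<^sub>R x0" "a = a1 + t1 * c" "(m1, a1) \<in> G"
    "x = m2 + t2 *\<^sub>R x0" "b = a2 + t2 * c" "(m2, a2) \<in> G" by blast
  have "t1 = t2"
  proof (rule ccontr)
    assume "t1 \<noteq> t2"
    have "m1 - m2 = (t2 - t1) *\<^sub>R x0"
      using e(1,4) by (simp add: algebra_simps)
    then have "x0 = (1 / (t2 - t1)) *\<^sub>R (m1 - m2)" using \<open>t1 \<noteq> t2\<close> by simp
    moreover have "(m1 - m2, a1 - a2) \<in> G"
      using linear_graph_add[OF G e(3) linear_graph_scaleR[OF G e(6), of "-1"]] by simp
    ultimately have "(x0, (1 / (t2 - t1)) * (a1 - a2)) \<in> G"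
      using linear_graph_scaleR[OF G, of "(m1 - m2, a1 - a2)" "1 / (t2 - t1)"] by simp
    then show False using x0 by blast
  qed
  moreover from this have "m1 = m2" using e(1,4) by simp
  ultimately show "a = b" using linear_graph_unique[OF G e(3)] e(2,5,6) by simp
qed

lemma dominated_linear_graph_adjoin:
  assumes G: "dominated_linear_graph F D G" and x0: "\<And>a. (x0, a) \<notin> G"
    and lower: "\<And>m a s y. (m, a) \<in> G \<Longrightarrow> s > 0 \<Longrightarrow> y \<in> D \<Longrightarrow> (a - F (m - s *\<^sub>R x0) y) / s \<le> c"
    and upper: "\<And>m a t y. (m, a) \<in> G \<Longrightarrow> t > 0 \<Longrightarrow> y \<in> D \<Longrightarrow> c \<le> (F (m + t *\<^sub>R x0) y - a) / t"
  shows "dominated_linear_graph F D {(m + t *\<^sub>R x0, a + t * c) | m a t. (m, a) \<in> G}"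
  unfolding dominated_linear_graph_def
proof (intro conjI allI impI ballI)
  show "linear_graph {(m + t *\<^sub>R x0, a + t * c) | m a t. (m, a) \<in> G}"
    using linear_graph_adjoin[OF dominated_linear_graph_linear[OF G] x0] .
  fix x a y assume "(x, a) \<in> {(m + t *\<^sub>R x0, a + t * c) | m a t. (m, a) \<in> G}" "y \<in> D"
  then obtain m a1 t where e: "x = m + t *\<^sub>R x0" "a = a1 + t * c" "(m, a1) \<in> G" by blast
  consider "t > 0" | "t = 0" | "t < 0" by linarith
  then show "a \<le> F x y"
  proof cases
    case 1
    then show ?thesis using upper[OF e(3) 1 \<open>y \<in> D\<close>] e by (simp add: field_simps)
  next
    case 2
    then show ?thesis using dominated_linear_graph_le[OF G e(3) \<open>y \<in> D\<close>] e by simp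
  next
    case 3
    then have "a1 - (- t) * c \<le> F (m - (- t) *\<^sub>R x0) y"
      using lower[OF e(3) _ \<open>y \<in> D\<close>, of "- t"] by (simp add: field_simps)
    then show ?thesis using e by simp
  qed
qed

lemma dominated_linear_graph_extend:
  assumes F: "convex_on (UNIV \<times> D) (\<lambda>(x, y). F x y)" and "y0 \<in> D"
    and G: "dominated_linear_graph F D G" and x0: "\<And>a. (x0, a) \<notin> G"
  obtains G' where "dominated_linear_graph F D G'" "G \<subset> G'"
proof -
  have zero: "(0, 0) \<in> G" using linear_graph_zero[OF dominated_linear_graph_linear[OF G]] .
  define L where "L = {(a - F (m - s *\<^sub>R x0) y) / s | m a s y. (m, a) \<in> G \<and> s > 0 \<and> y \<in> D}"
  have "(0 - F (0 - 1 *\<^sub>R x0) y0) / 1 \<in> L"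
    using zero \<open>y0 \<in> D\<close> unfolding L_def by fastforce
  then have "L \<noteq> {}" by blast
  have "bdd_above L"
  proof (rule bdd_aboveI)
    fix l assume "l \<in> L"
    then show "l \<le> (F (0 + 1 *\<^sub>R x0) y0 - 0) / 1"
      unfolding L_def using dominated_linear_graph_slope_le[OF F G zero _ _ zero_less_one \<open>y0 \<in> D\<close>]
      by blast
  qed
  have upper: "Sup L \<le> (F (m + t *\<^sub>R x0) y - a) / t" if "(m, a) \<in> G" "t > 0" "y \<in> D" for m a t y
  proof (rule cSup_least[OF \<open>L \<noteq> {}\<close>])
    fix l assume "l \<in> L"
    then show "l \<le> (F (m + t *\<^sub>R x0) y - a) / t"
      unfolding L_def using dominated_linear_graph_slope_le[OF F G that(1) _ _ that(2,3)] by blast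
  qed
  have lower: "(a - F (m - s *\<^sub>R x0) y) / s \<le> Sup L" if "(m, a) \<in> G" "s > 0" "y \<in> D" for m a s y
    using \<open>bdd_above L\<close> that unfolding L_def by (intro cSup_upper) blast+
  have G': "dominated_linear_graph F D {(m + t *\<^sub>R x0, a + t * Sup L) | m a t. (m, a) \<in> G}"
    using dominated_linear_graph_adjoin[OF G x0 lower upper] .
  have "G \<subseteq> {(m + t *\<^sub>R x0, a + t * Sup L) | m a t. (m, a) \<in> G}"
    by (force intro: exI[of _ 0])
  moreover have "(x0, Sup L) \<in> {(m + t *\<^sub>R x0, a + t * Sup L) | m a t. (m, a) \<in> G}"
    using zero by (force intro: exI[of _ 1])
  ultimately show ?thesis using that[OF G'] x0 by blast
qed

lemma dominated_linear_graph_Union_chain: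
  assumes "C \<noteq> {}" and chain: "subset.chain {G. dominated_linear_graph F D G} C"
  shows "dominated_linear_graph F D (\<Union>C)"
proof -
  have G: "dominated_linear_graph F D G" if "G \<in> C" for G
    using chain that by (auto simp: subset_chain_def)
  note lin = dominated_linear_graph_linear[OF G]
  have total: "X \<subseteq> Y \<or> Y \<subseteq> X" if "X \<in> C" "Y \<in> C" for X Y
    using chain that unfolding subset_chain_def by blast
  have common: "\<exists>G\<in>C. p \<in> G \<and> q \<in> G" if pq: "p \<in> \<Union>C" "q \<in> \<Union>C" for p q
  proof -
    obtain X Y where "X \<in> C" "Y \<in> C" "p \<in> X" "q \<in> Y" using pq by blast
    then show ?thesis using total[of X Y] by blast
  qed
  show ?thesis
    unfolding dominated_linear_graph_def linear_graph_def
  proof (intro conjI ballI allI impI)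
    obtain G where "G \<in> C" using \<open>C \<noteq> {}\<close> by blast
    then show "(0, 0) \<in> \<Union>C" using linear_graph_zero[OF lin] by blast
  next
    fix p q assume "p \<in> \<Union>C" "q \<in> \<Union>C"
    then obtain G where "G \<in> C" "p \<in> G" "q \<in> G" using common by blast
    then show "p + q \<in> \<Union>C" using linear_graph_add[OF lin] by blast
  next
    fix p t assume "p \<in> \<Union>C"
    then obtain G where "G \<in> C" "p \<in> G" by blast
    then show "t *\<^sub>R p \<in> \<Union>C" using linear_graph_scaleR[OF lin] by blast
  next
    fix x a b assume "(x, a) \<in> \<Union>C" "(x, b) \<in> \<Union>C"
    then obtain G where "G \<in> C" "(x, a) \<in> G" "(x, b) \<in> G" using common by blast
    then show "a = b" using linear_graph_unique[OF lin] by blast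
  next
    fix x a y assume "(x, a) \<in> \<Union>C" "y \<in> D"
    then obtain G where "G \<in> C" "(x, a) \<in> G" by blast
    then show "a \<le> F x y" using dominated_linear_graph_le[OF G] \<open>y \<in> D\<close> by blast
  qed
qed

lemma jointly_convex_linear_minorant:
  fixes F :: "'a::real_vector \<Rightarrow> 'c::real_vector \<Rightarrow> real"
  assumes F: "convex_on (UNIV \<times> D) (\<lambda>(x, y). F x y)" and "y0 \<in> D"
    and nonneg: "\<And>y. y \<in> D \<Longrightarrow> 0 \<le> F 0 y"
  obtains l where "linear l" "\<And>x y. y \<in> D \<Longrightarrow> l x \<le> F x y"
proof -
  let ?A = "{G. dominated_linear_graph F D G}"
  have "\<exists>M\<in>?A. \<forall>G\<in>?A. M \<subseteq> G \<longrightarrow> G = M"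
  proof (rule subset_Zorn_nonempty)
    have "dominated_linear_graph F D {(0, 0)}"
      using nonneg by (auto simp: dominated_linear_graph_def linear_graph_def)
    then show "?A \<noteq> {}" by blast
    show "\<Union>C \<in> ?A" if "C \<noteq> {}" "subset.chain ?A C" for C
      using dominated_linear_graph_Union_chain[OF that] by simp
  qed
  then obtain M where M: "dominated_linear_graph F D M"
    and max: "\<And>G. dominated_linear_graph F D G \<Longrightarrow> M \<subseteq> G \<Longrightarrow> G = M"
    by blast
  note lin = dominated_linear_graph_linear[OF M]
  have total: "\<exists>a. (x, a) \<in> M" for x
  proof (rule ccontr)
    assume "\<nexists>a. (x, a) \<in> M"
    then obtain G where "dominated_linear_graph F D G" "M \<subset> G"
      using dominated_linear_graph_extend[OF F \<open>y0 \<in> D\<close> M] by blast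
    then show False using max by blast
  qed
  define l where "l x = (THE a. (x, a) \<in> M)" for x
  have graph: "(x, l x) \<in> M" for x
    unfolding l_def using total[of x] linear_graph_unique[OF lin, of x] by (metis theI)
  then have l_eq: "(x, a) \<in> M \<Longrightarrow> l x = a" for x a
    using linear_graph_unique[OF lin] by blast
  have "linear l"
  proof (rule linearI)
    show "l (x + y) = l x + l y" for x y
      using linear_graph_add[OF lin graph[of x] graph[of y]] l_eq by simp
    show "l (r *\<^sub>R x) = r *\<^sub>R l x" for r x
      using linear_graph_scaleR[OF lin graph[of x], of r] l_eq by simp
  qed
  then show ?thesis
    using that graph dominated_linear_graph_le[OF M] by blast
qed

section \<open>Convex functions\<close>

lemma proper_convex_finite:
  assumes "proper_convex f" "f b \<noteq> \<infinity>"
  shows "f b = ereal (real_of_ereal (f b))"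
  using assms unfolding proper_convex_def by (cases "f b") auto

lemma proper_convex_imp_convex_on:
  assumes "proper_convex f"
  shows "convex_on {b. f b \<noteq> \<infinity>} (\<lambda>b. real_of_ereal (f b))"
proof -
  have "(b, r) \<in> epigraph {b. f b \<noteq> \<infinity>} (\<lambda>b. real_of_ereal (f b)) \<longleftrightarrow> f b \<le> ereal r" for b r
    using assms unfolding proper_convex_def by (cases "f b") (auto simp: mem_epigraph)
  then have "epigraph {b. f b \<noteq> \<infinity>} (\<lambda>b. real_of_ereal (f b)) = {(b, r). f b \<le> ereal r}"
    by (auto simp: set_eq_iff)
  then show ?thesis
    using assms convex_epigraph unfolding proper_convex_def by metis
qed

lemma BC_function_qf_le:
  assumes "BC_function bf f" "f b \<noteq> \<infinity>"
  shows "qf bf b \<le> real_of_ereal (f b)"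
  using assms proper_convex_finite[of f b] unfolding BC_function_def by (metis ereal_less_eq(3))

lemma fconj_le:
  assumes "\<And>y. f y \<noteq> -\<infinity>" and "\<And>y r. f y = ereal r \<Longrightarrow> bf y c - r \<le> s"
  shows "fconj bf f c \<le> ereal s"
  unfolding fconj_def
proof (rule SUP_least)
  fix y
  show "ereal (bf y c) - f y \<le> ereal s"
  proof (cases "f y")
    case (real r)
    then show ?thesis using assms(2)[OF real] by simp
  qed (use assms(1) in simp_all)
qed

lemma convex_on_SUP:
  fixes f :: "'i \<Rightarrow> 'a::real_vector \<Rightarrow> real"
  assumes "I \<noteq> {}" "\<And>i. i \<in> I \<Longrightarrow> convex_on UNIV (f i)"
  shows "convex_on {x. bdd_above ((\<lambda>i. f i x) ` I)} (\<lambda>x. SUP i\<in>I. f i x)"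
proof -
  have comb: "f i ((1 - t) *\<^sub>R x + t *\<^sub>R y) \<le> (1 - t) * (SUP i\<in>I. f i x) + t * (SUP i\<in>I. f i y)"
    if "i \<in> I" "0 \<le> t" "t \<le> 1" "bdd_above ((\<lambda>i. f i x) ` I)" "bdd_above ((\<lambda>i. f i y) ` I)"
    for i t x y
  proof -
    have "f i ((1 - t) *\<^sub>R x + t *\<^sub>R y) \<le> (1 - t) * f i x + t * f i y"
      using convex_onD[OF assms(2)[OF \<open>i \<in> I\<close>]] that by simp
    also have "\<dots> \<le> (1 - t) * (SUP i\<in>I. f i x) + t * (SUP i\<in>I. f i y)"
      using that by (intro add_mono mult_left_mono cSUP_upper) auto
    finally show ?thesis .
  qed
  let ?S = "{x. bdd_above ((\<lambda>i. f i x) ` I)}"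
  have "convex ?S"
    unfolding convex_alt
  proof (intro ballI allI impI)
    fix x y and t :: real assume "x \<in> ?S" "y \<in> ?S" "0 \<le> t \<and> t \<le> 1"
    then show "(1 - t) *\<^sub>R x + t *\<^sub>R y \<in> ?S"
      using comb[of _ t x y] by simp (rule bdd_aboveI2, blast)
  qed
  then show ?thesis
  proof (rule convex_onI[rotated])
    fix t :: real and x y assume "0 < t" "t < 1" "x \<in> ?S" "y \<in> ?S"
    then show "(SUP i\<in>I. f i ((1 - t) *\<^sub>R x + t *\<^sub>R y)) \<le> (1 - t) * (SUP i\<in>I. f i x) + t * (SUP i\<in>I. f i y)"
      using comb[of _ t x y] \<open>I \<noteq> {}\<close> by (simp add: cSUP_least)
  qed
qed

lemma le_if_forall_add_scaled_le:
  fixes a b c :: real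
  assumes "\<And>t. 0 < t \<Longrightarrow> t \<le> 1 \<Longrightarrow> a + t * b \<le> c"
  shows "a \<le> c"
proof (rule field_le_epsilon)
  fix e :: real assume "0 < e"
  define t where "t = min 1 (e / (\<bar>b\<bar> + 1))"
  have t: "0 < t" "t \<le> 1" using \<open>0 < e\<close> by (auto simp: t_def)
  have "t * (- b) \<le> t * \<bar>b\<bar>"
    using t by (intro mult_left_mono) auto
  then have "- (t * b) \<le> t * \<bar>b\<bar>" by simp
  also have "\<dots> \<le> e / (\<bar>b\<bar> + 1) * (\<bar>b\<bar> + 1)"
    unfolding t_def using \<open>0 < e\<close> by (intro mult_mono) auto
  also have "\<dots> = e" by simp
  finally have "- (t * b) \<le> e" .
  then show "a \<le> c + e" using assms[OF t] by simp
qed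

lemma bounded_linear_if_bounded_above_on_unit_ball:
  fixes l :: "'a::real_normed_vector \<Rightarrow> real"
  assumes "linear l" and bound: "\<And>u. norm u \<le> 1 \<Longrightarrow> l u \<le> K"
  shows "bounded_linear l"
proof (rule bounded_linear_intro[where K = K])
  show "l (x + y) = l x + l y" for x y using linear_add[OF \<open>linear l\<close>] .
  show "l (r *\<^sub>R x) = r *\<^sub>R l x" for r x using linear_scale[OF \<open>linear l\<close>] .
  show "norm (l x) \<le> norm x * K" for x
  proof (cases "x = 0")
    case True
    then show ?thesis using linear_0[OF \<open>linear l\<close>] by simp
  next
    case False
    let ?u = "(1 / norm x) *\<^sub>R x"
    have "l ?u \<le> K" "l (- ?u) \<le> K" using bound False by auto
    then have "\<bar>l ?u\<bar> \<le> K" using linear_neg[OF \<open>linear l\<close>, of ?u] by linarith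
    then have "\<bar>l x\<bar> / norm x \<le> K"
      using False linear_scale[OF \<open>linear l\<close>, of "1 / norm x" x] by (simp add: abs_mult)
    then show ?thesis using False by (simp add: divide_le_eq mult.commute)
  qed
qed

lemma convex_on_norm_square: "convex_on UNIV (\<lambda>x::'a::real_normed_vector. (norm x)\<^sup>2)"
proof (rule convex_onI)
  fix t :: real and x y :: 'a assume t: "0 < t" "t < 1"
  have "norm ((1 - t) *\<^sub>R x + t *\<^sub>R y) \<le> (1 - t) * norm x + t * norm y"
    using norm_triangle_ineq[of "(1 - t) *\<^sub>R x" "t *\<^sub>R y"] t by simp
  then have "(norm ((1 - t) *\<^sub>R x + t *\<^sub>R y))\<^sup>2 \<le> ((1 - t) * norm x + t * norm y)\<^sup>2"
    by (simp add: power_mono)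
  also have "\<dots> \<le> (1 - t) * (norm x)\<^sup>2 + t * (norm y)\<^sup>2"
  proof -
    have "0 \<le> t * (1 - t) * (norm x - norm y)\<^sup>2" using t by simp
    then show ?thesis by (simp add: power2_eq_square algebra_simps)
  qed
  finally show "(norm ((1 - t) *\<^sub>R x + t *\<^sub>R y))\<^sup>2 \<le> (1 - t) * (norm x)\<^sup>2 + t * (norm y)\<^sup>2" .
qed simp

lemma convex_on_add_half_norm_square:
  fixes h :: "'a::real_normed_vector \<Rightarrow> real"
  assumes h: "convex_on D h"
  shows "convex_on (UNIV \<times> D) (\<lambda>(x, y). h y + norm (y - d - x) ^ 2 / 2)"
proof (rule convex_onI)
  show "convex (UNIV \<times> D)" using convex_on_imp_convex[OF h] by (simp add: convex_Times)
  fix t :: real and p q :: "'a \<times> 'a" assume t: "0 < t" "t < 1" and pq: "p \<in> UNIV \<times> D" "q \<in> UNIV \<times> D"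
  obtain x1 y1 x2 y2 where p: "p = (x1, y1)" "y1 \<in> D" and q: "q = (x2, y2)" "y2 \<in> D"
    using pq by auto
  have regroup: "(1 - t) * (a1 + n1 / 2) + t * (a2 + n2 / 2) = ((1 - t) * a1 + t * a2) + ((1 - t) * n1 + t * n2) / 2"
    for a1 n1 a2 n2 :: real
    by (simp add: field_simps)
  have pt: "(1 - t) *\<^sub>R (x1, y1) + t *\<^sub>R (x2, y2) = ((1 - t) *\<^sub>R x1 + t *\<^sub>R x2, (1 - t) *\<^sub>R y1 + t *\<^sub>R y2)"
    by simp
  have "h ((1 - t) *\<^sub>R y1 + t *\<^sub>R y2) \<le> (1 - t) * h y1 + t * h y2"
    using convex_onD[OF h] t p q by simp
  moreover have "(1 - t) *\<^sub>R y1 + t *\<^sub>R y2 - d - ((1 - t) *\<^sub>R x1 + t *\<^sub>R x2)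
      = (1 - t) *\<^sub>R (y1 - d - x1) + t *\<^sub>R (y2 - d - x2)"
    by (simp add: algebra_simps)
  then have "norm ((1 - t) *\<^sub>R y1 + t *\<^sub>R y2 - d - ((1 - t) *\<^sub>R x1 + t *\<^sub>R x2)) ^ 2 / 2
      \<le> ((1 - t) * norm (y1 - d - x1) ^ 2 + t * norm (y2 - d - x2) ^ 2) / 2"
    using convex_onD[OF convex_on_norm_square, of t "y1 - d - x1" "y2 - d - x2"] t by simp
  ultimately show "(\<lambda>(x, y). h y + norm (y - d - x) ^ 2 / 2) ((1 - t) *\<^sub>R p + t *\<^sub>R q)
      \<le> (1 - t) * (\<lambda>(x, y). h y + norm (y - d - x) ^ 2 / 2) p
        + t * (\<lambda>(x, y). h y + norm (y - d - x) ^ 2 / 2) q"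
    unfolding pt p(1) q(1) prod.case regroup by linarith
qed

section \<open>SSDB spaces\<close>

definition tangent_envelope :: "('b::banach \<Rightarrow> 'b \<Rightarrow> real) \<Rightarrow> 'b set \<Rightarrow> 'b \<Rightarrow> real" where
  "tangent_envelope bf A y = (SUP a\<in>A. bf a y - qf bf a)"

definition tangent_envelope_dom :: "('b::banach \<Rightarrow> 'b \<Rightarrow> real) \<Rightarrow> 'b set \<Rightarrow> 'b set" where
  "tangent_envelope_dom bf A = {y. bdd_above ((\<lambda>a. bf a y - qf bf a) ` A)}"

locale ssdb =
  fixes bf :: "'b::banach \<Rightarrow> 'b \<Rightarrow> real"
  assumes SSDB: "SSDB bf"
begin

lemma bilinear_bf: "bilinear bf"
  and bf_commute: "bf b c = bf c b"
  and bounded_linear_bf: "bounded_linear (\<lambda>b. bf b c)"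
  and onorm_bf: "onorm (\<lambda>b. bf b c) = norm c"
  and bf_representation: "bounded_linear \<phi> \<Longrightarrow> \<exists>c. \<forall>b. \<phi> b = bf b c"
  and nontrivial: "\<exists>b::'b. b \<noteq> 0"
  using SSDB unfolding SSDB_def by blast+

lemmas bf_simps =
  bilinear_ladd[OF bilinear_bf] bilinear_radd[OF bilinear_bf]
  bilinear_lsub[OF bilinear_bf] bilinear_rsub[OF bilinear_bf]
  bilinear_lneg[OF bilinear_bf] bilinear_rneg[OF bilinear_bf]
  bilinear_lzero[OF bilinear_bf] bilinear_rzero[OF bilinear_bf]
  bilinear_lmul[OF bilinear_bf, simplified] bilinear_rmul[OF bilinear_bf, simplified]

lemma qf_add: "qf bf (x + y) = qf bf x + bf x y + qf bf y"
  unfolding qf_def by (simp add: bf_simps bf_commute[of y x] field_simps)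

lemma qf_diff: "qf bf (x - y) = qf bf x - bf x y + qf bf y"
  unfolding qf_def by (simp add: bf_simps bf_commute[of y x] field_simps)

lemma qf_scaleR: "qf bf (t *\<^sub>R x) = t\<^sup>2 * qf bf x"
  unfolding qf_def by (simp add: bf_simps power2_eq_square)

lemma qf_minus: "qf bf (- x) = qf bf x"
  unfolding qf_def by (simp add: bf_simps)

lemma qf_zero: "qf bf 0 = 0"
  unfolding qf_def by (simp add: bf_simps)

lemma abs_bf_le: "\<bar>bf b c\<bar> \<le> norm b * norm c"
  using onorm[OF bounded_linear_bf, of b c] onorm_bf[of c] by (simp add: mult.commute)

lemma half_norm_square_add_qf_nonneg: "0 \<le> norm x ^ 2 / 2 + qf bf x"
  using abs_bf_le[of x x] unfolding qf_def by (simp add: power2_eq_square abs_le_iff)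

lemma mem_Nq_g0_iff: "c \<in> Nq bf g0 \<longleftrightarrow> norm c ^ 2 / 2 + qf bf c \<le> 0"
  using half_norm_square_add_qf_nonneg[of c] unfolding Nq_def g0_def by auto

lemma bf_norming:
  assumes "0 < e"
  obtains u where "norm u = 1" "norm c - e \<le> bf u c"
proof -
  have "\<exists>u. norm u = 1 \<and> norm c - e \<le> bf u c"
  proof (rule ccontr)
    assume "\<nexists>u. norm u = 1 \<and> norm c - e \<le> bf u c"
    then have small: "\<bar>bf u c\<bar> < norm c - e" if "norm u = 1" for u
      using that by (smt (verit) bilinear_lneg[OF bilinear_bf] norm_minus_cancel)
    obtain b :: 'b where "b \<noteq> 0" using nontrivial by blast
    then have "0 < norm c - e" using small[of "(1 / norm b) *\<^sub>R b"] by simp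
    have "norm (bf x c) \<le> (norm c - e) * norm x" for x
    proof (cases "x = 0")
      case True
      then show ?thesis by (simp add: bf_simps)
    next
      case False
      then have "\<bar>bf x c\<bar> / norm x < norm c - e"
        using small[of "(1 / norm x) *\<^sub>R x"] by (simp add: bf_simps abs_mult)
      then show ?thesis using False by (simp add: divide_less_eq mult.commute less_imp_le)
    qed
    then have "onorm (\<lambda>b. bf b c) \<le> norm c - e"
      using \<open>0 < norm c - e\<close> by (intro onorm_bound) auto
    then show False using onorm_bf \<open>0 < e\<close> by simp
  qed
  then show ?thesis using that by blast
qed

text \<open>Since the isometry is norming, \<open>g0\<close> is its own conjugate; this is the half that is needed.\<close>
lemma half_norm_square_le_if_bf_le:
  assumes bound: "\<And>w. bf w c - norm w ^ 2 / 2 \<le> r"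
  shows "norm c ^ 2 / 2 \<le> r"
proof (rule field_le_epsilon)
  fix e :: real assume "0 < e"
  have pos: "0 < norm c + 1" by (simp add: add_nonneg_pos)
  then have "0 < e / (norm c + 1)" using \<open>0 < e\<close> by simp
  then obtain u where u: "norm u = 1" "norm c - e / (norm c + 1) \<le> bf u c"
    using bf_norming by blast
  have "norm c * (norm c - e / (norm c + 1)) \<le> norm c * bf u c"
    using u by (simp add: mult_left_mono)
  moreover have "norm c * (e / (norm c + 1)) \<le> e"
    using \<open>0 < e\<close> pos by (simp add: divide_le_eq mult_left_mono)
  moreover have "norm c * bf u c - norm c ^ 2 / 2 \<le> r"
    using bound[of "norm c *\<^sub>R u"] u by (simp add: bf_simps)
  ultimately show "norm c ^ 2 / 2 \<le> r + e"
    by (simp add: power2_eq_square right_diff_distrib)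
qed

lemma convex_ge_qf_obtain_point:
  assumes \<phi>: "convex_on D \<phi>" and "y0 \<in> D" and ge: "\<And>y. y \<in> D \<Longrightarrow> qf bf y \<le> \<phi> y"
  obtains e where "\<And>y. y \<in> D \<Longrightarrow> norm (e - d) ^ 2 / 2 + qf bf (e - d) \<le> \<phi> y - qf bf y + qf bf (y - e)"
proof -
  define h where "h y = \<phi> y - bf y d + qf bf d" for y
  define F where "F x y = h y + norm (y - d - x) ^ 2 / 2" for x y
  have "convex_on D h"
  proof (rule convex_onI[OF _ convex_on_imp_convex[OF \<phi>]])
    fix t :: real and x y assume "0 < t" "t < 1" "x \<in> D" "y \<in> D"
    then show "h ((1 - t) *\<^sub>R x + t *\<^sub>R y) \<le> (1 - t) * h x + t * h y"
      using convex_onD[OF \<phi>, of t x y] unfolding h_def by (simp add: bf_simps algebra_simps)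
  qed
  then have "convex_on (UNIV \<times> D) (\<lambda>(x, y). F x y)"
    unfolding F_def by (rule convex_on_add_half_norm_square)
  moreover have "0 \<le> F 0 y" if "y \<in> D" for y
    using ge[OF that] half_norm_square_add_qf_nonneg[of "y - d"] qf_diff[of y d]
    unfolding F_def h_def by simp
  ultimately obtain l where "linear l" and l: "\<And>x y. y \<in> D \<Longrightarrow> l x \<le> F x y"
    using jointly_convex_linear_minorant \<open>y0 \<in> D\<close> by blast
  have "l u \<le> h y0 + (norm (y0 - d) + 1) ^ 2 / 2" if "norm u \<le> 1" for u
  proof -
    have "norm (y0 - d - u) \<le> norm (y0 - d) + 1"
      using norm_triangle_ineq4[of "y0 - d" u] that by simp
    then have "norm (y0 - d - u) ^ 2 \<le> (norm (y0 - d) + 1) ^ 2"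
      by (rule power_mono) simp
    then show ?thesis
      using l[OF \<open>y0 \<in> D\<close>, of u] unfolding F_def by linarith
  qed
  then have "bounded_linear l"
    using bounded_linear_if_bounded_above_on_unit_ball \<open>linear l\<close> by blast
  then obtain c where c: "\<And>b. l b = bf b c" using bf_representation by blast
  show ?thesis
  proof (rule that[of "d + c"])
    fix y assume "y \<in> D"
    \<comment> \<open>\<open>x = y - d + w\<close> turns \<open>l x \<le> F x y\<close> into a bound on the conjugate of \<open>g0\<close> at \<open>c\<close>\<close>
    have "bf w c - norm w ^ 2 / 2 \<le> h y - bf (y - d) c" for w
      using l[OF \<open>y \<in> D\<close>, of "y - d + w"] unfolding c F_def by (simp add: bf_simps)
    then have "norm c ^ 2 / 2 \<le> h y - bf (y - d) c"
      by (rule half_norm_square_le_if_bf_le)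
    then show "norm (d + c - d) ^ 2 / 2 + qf bf (d + c - d) \<le> \<phi> y - qf bf y + qf bf (y - (d + c))"
      unfolding h_def using qf_diff[of "y - d" c] qf_diff[of y d] by (simp add: diff_diff_eq)
  qed
qed

lemma convex_ge_qf_tangent:
  assumes \<phi>: "convex_on D \<phi>" and ge: "\<And>y. y \<in> D \<Longrightarrow> qf bf y \<le> \<phi> y"
    and b: "b \<in> D" "\<phi> b = qf bf b" and y: "y \<in> D"
  shows "bf y b - qf bf b \<le> \<phi> y"
proof (rule le_if_forall_add_scaled_le)
  fix t :: real assume t: "0 < t" "t \<le> 1"
  have "(1 - t) *\<^sub>R b + t *\<^sub>R y \<in> D"
    using convexD_alt[OF convex_on_imp_convex[OF \<phi>] b(1) y] t by simp
  then have "qf bf ((1 - t) *\<^sub>R b + t *\<^sub>R y) \<le> (1 - t) * qf bf b + t * \<phi> y"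
    using ge convex_onD[OF \<phi>, of t b y] t b y by fastforce
  moreover have "(1 - t) *\<^sub>R b + t *\<^sub>R y = b + t *\<^sub>R (y - b)" by (simp add: algebra_simps)
  ultimately have "qf bf b + t * bf b (y - b) + t\<^sup>2 * qf bf (y - b) \<le> (1 - t) * qf bf b + t * \<phi> y"
    by (simp add: qf_add qf_scaleR bf_simps)
  moreover have "qf bf b + t * bf b (y - b) + t\<^sup>2 * qf bf (y - b)
      = (1 - t) * qf bf b + t * (bf y b - qf bf b + t * qf bf (y - b))"
    by (simp add: bf_simps bf_commute[of b y] qf_def field_simps power2_eq_square)
  ultimately have "t * (bf y b - qf bf b + t * qf bf (y - b)) \<le> t * \<phi> y" by linarith
  then show "bf y b - qf bf b + t * qf bf (y - b) \<le> \<phi> y" using t by simp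
qed

lemma BC_function_mdiff_Pq_Nq:
  assumes BC: "BC_function bf f"
  shows "mdiff (Pq bf f) (Nq bf g0) = UNIV"
proof -
  have pc: "proper_convex f" and conj: "\<And>b. f b \<le> fconj bf f b"
    and above: "\<And>b. ereal (qf bf b) \<le> f b"
    using BC unfolding BC_function_def by auto
  obtain y0 where "f y0 \<noteq> \<infinity>" using pc unfolding proper_convex_def by blast
  have "d \<in> mdiff (Pq bf f) (Nq bf g0)" for d
  proof -
    obtain e where e: "\<And>y. f y \<noteq> \<infinity> \<Longrightarrow>
        norm (e - d) ^ 2 / 2 + qf bf (e - d) \<le> real_of_ereal (f y) - qf bf y + qf bf (y - e)"
      using convex_ge_qf_obtain_point[OF proper_convex_imp_convex_on[OF pc], of y0]
        \<open>f y0 \<noteq> \<infinity>\<close> BC_function_qf_le[OF BC] by auto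
    let ?g = "norm (e - d) ^ 2 / 2 + qf bf (e - d)"
    have "fconj bf f e \<le> ereal (qf bf e - ?g)"
    proof (rule fconj_le)
      show "f y \<noteq> - \<infinity>" for y using pc unfolding proper_convex_def by blast
      show "bf y e - r \<le> qf bf e - ?g" if "f y = ereal r" for y r
        using e[of y] that qf_diff[of y e] by simp
    qed
    then have f_e: "f e \<le> ereal (qf bf e - ?g)"
      using conj[of e] by simp
    have "ereal (qf bf e) \<le> ereal (qf bf e - ?g)"
      using above[of e] f_e by (rule order_trans)
    then have "e - d \<in> Nq bf g0"
      unfolding mem_Nq_g0_iff by simp
    moreover have "f e \<le> ereal (qf bf e)"
      using f_e half_norm_square_add_qf_nonneg[of "e - d"] by (simp add: order_trans)
    then have "e \<in> Pq bf f"
      using above[of e] unfolding Pq_def by (simp add: antisym)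
    ultimately show ?thesis unfolding mdiff_def by force
  qed
  then show ?thesis by blast
qed

lemma max_q_positive_if_mdiff_Nq:
  assumes A: "q_positive bf A" and cover: "mdiff A (Nq bf g0) = UNIV"
  shows "max_q_positive bf A"
  unfolding max_q_positive_def
proof (intro conjI allI impI)
  fix A' assume A': "q_positive bf A' \<and> A \<subseteq> A'"
  have "x \<in> A" if "x \<in> A'" for x
  proof -
    obtain a c where ac: "x = a - c" "a \<in> A" "c \<in> Nq bf g0"
      using cover unfolding mdiff_def by blast
    have "0 \<le> qf bf (x - a)" using A' that ac(2) unfolding q_positive_def by blast
    then have "0 \<le> qf bf c" using ac(1) qf_minus[of c] by simp
    then have "norm c ^ 2 \<le> 0" using ac(3) unfolding mem_Nq_g0_iff by linarith
    then have "c = 0" by simp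
    then show ?thesis using ac by simp
  qed
  then show "A' = A" using A' by blast
qed (fact A)

lemma BC_function_tangent:
  assumes BC: "BC_function bf f" and b: "b \<in> Pq bf f" and y: "f y = ereal r"
  shows "bf y b - qf bf b \<le> r"
proof -
  have pc: "proper_convex f" using BC unfolding BC_function_def by auto
  have "f b \<noteq> \<infinity>" "real_of_ereal (f b) = qf bf b" using b unfolding Pq_def by auto
  then show ?thesis
    using convex_ge_qf_tangent[OF proper_convex_imp_convex_on[OF pc], of b y]
      BC_function_qf_le[OF BC] y by simp
qed

lemma BC_function_Pq_q_positive:
  assumes BC: "BC_function bf f"
  shows "q_positive bf (Pq bf f)"
  unfolding q_positive_def
proof (intro conjI ballI)
  show "Pq bf f \<noteq> {}"
    using BC_function_mdiff_Pq_Nq[OF BC] unfolding mdiff_def by auto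
  fix b c assume "b \<in> Pq bf f" "c \<in> Pq bf f"
  then have "bf c b - qf bf b \<le> qf bf c"
    using BC_function_tangent[OF BC, of b c] unfolding Pq_def by simp
  then show "0 \<le> qf bf (b - c)"
    using qf_diff[of b c] bf_commute[of b c] by simp
qed

lemma BC_function_Pq_fconj:
  assumes BC: "BC_function bf f"
  shows "Pq bf (fconj bf f) = Pq bf f"
proof -
  have pc: "proper_convex f" and conj: "\<And>b. f b \<le> fconj bf f b"
    and above: "\<And>b. ereal (qf bf b) \<le> f b"
    using BC unfolding BC_function_def by auto
  have le: "fconj bf f b \<le> ereal (qf bf b)" if b: "b \<in> Pq bf f" for b
  proof (rule fconj_le)
    show "f y \<noteq> - \<infinity>" for y using pc unfolding proper_convex_def by blast
    show "bf y b - r \<le> qf bf b" if "f y = ereal r" for y r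
      using BC_function_tangent[OF BC b that] by simp
  qed
  have "fconj bf f b = ereal (qf bf b) \<longleftrightarrow> f b = ereal (qf bf b)" for b
  proof
    assume "fconj bf f b = ereal (qf bf b)"
    then have "f b \<le> ereal (qf bf b)" using conj[of b] by simp
    then show "f b = ereal (qf bf b)" using above[of b] by (rule antisym)
  next
    assume "f b = ereal (qf bf b)"
    then show "fconj bf f b = ereal (qf bf b)"
      using antisym[OF le order_trans[OF above[of b] conj[of b]]] unfolding Pq_def by simp
  qed
  then show ?thesis unfolding Pq_def by simp
qed

lemma max_q_positive_memI:
  assumes max: "max_q_positive bf A" and compatible: "\<And>a. a \<in> A \<Longrightarrow> 0 \<le> qf bf (a - z)"
  shows "z \<in> A"
proof -
  have pos: "\<And>a b. a \<in> A \<Longrightarrow> b \<in> A \<Longrightarrow> 0 \<le> qf bf (a - b)"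
    using max unfolding max_q_positive_def q_positive_def by blast
  have "q_positive bf (insert z A)"
    unfolding q_positive_def
  proof (intro conjI ballI)
    fix x y assume "x \<in> insert z A" "y \<in> insert z A"
    then consider "x = z" "y = z" | "x \<in> A" "y = z" | "x = z" "y \<in> A" | "x \<in> A" "y \<in> A"
      by blast
    then show "0 \<le> qf bf (x - y)"
    proof cases
      case 1
      then show ?thesis using qf_zero by simp
    next
      case 2
      then show ?thesis using compatible by simp
    next
      case 3
      then show ?thesis using compatible[of y] qf_minus[of "y - z"] by simp
    next
      case 4
      then show ?thesis using pos by simp
    qed
  qed simp
  then show ?thesis using max unfolding max_q_positive_def by blast
qed

lemma convex_on_tangent_envelope:
  assumes "A \<noteq> {}"
  shows "convex_on (tangent_envelope_dom bf A) (tangent_envelope bf A)"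
proof -
  have "convex_on UNIV (\<lambda>y. bf a y - qf bf a)" for a
    by (rule convex_onI) (simp_all add: bf_simps algebra_simps)
  then show ?thesis
    unfolding tangent_envelope_dom_def tangent_envelope_def using assms by (rule convex_on_SUP[rotated])
qed

lemma tangent_envelope_eq_qf:
  assumes "q_positive bf A" "a0 \<in> A"
  shows "a0 \<in> tangent_envelope_dom bf A" and "tangent_envelope bf A a0 = qf bf a0"
proof -
  have le: "bf a a0 - qf bf a \<le> qf bf a0" if "a \<in> A" for a
    using assms that qf_diff[of a a0] bf_commute[of a a0] unfolding q_positive_def by fastforce
  have "qf bf a0 \<in> (\<lambda>a. bf a a0 - qf bf a) ` A"
    using \<open>a0 \<in> A\<close> by (rule image_eqI[rotated]) (simp add: qf_def)
  moreover have "bdd_above ((\<lambda>a. bf a a0 - qf bf a) ` A)"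
    using le by (rule bdd_aboveI2)
  ultimately show "a0 \<in> tangent_envelope_dom bf A" and "tangent_envelope bf A a0 = qf bf a0"
    unfolding tangent_envelope_dom_def tangent_envelope_def using le by (auto intro: cSup_eq_maximum)
qed

lemma qf_le_tangent_envelope:
  assumes max: "max_q_positive bf A" and y: "y \<in> tangent_envelope_dom bf A"
  shows "qf bf y \<le> tangent_envelope bf A y"
proof (cases "y \<in> A")
  case True
  then show ?thesis
    using tangent_envelope_eq_qf max unfolding max_q_positive_def by simp
next
  case False
  then obtain a where a: "a \<in> A" "qf bf (a - y) < 0"
    using max_q_positive_memI[OF max] by (meson not_le)
  then have "qf bf y < bf a y - qf bf a" using qf_diff[of a y] bf_commute[of a y] by simp
  also have "\<dots> \<le> tangent_envelope bf A y"
    using cSUP_upper[OF a(1), of "\<lambda>a. bf a y - qf bf a"] y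
    unfolding tangent_envelope_dom_def tangent_envelope_def by simp
  finally show ?thesis by simp
qed

lemma max_q_positive_mdiff_Nq:
  assumes max: "max_q_positive bf A"
  shows "mdiff A (Nq bf g0) = UNIV"
proof -
  have A: "q_positive bf A" and "A \<noteq> {}"
    using max unfolding max_q_positive_def q_positive_def by auto
  then obtain a0 where "a0 \<in> A" by blast
  have "d \<in> mdiff A (Nq bf g0)" for d
  proof -
    obtain e where e: "\<And>y. y \<in> tangent_envelope_dom bf A \<Longrightarrow>
        norm (e - d) ^ 2 / 2 + qf bf (e - d) \<le> tangent_envelope bf A y - qf bf y + qf bf (y - e)"
      using convex_ge_qf_obtain_point[OF convex_on_tangent_envelope[OF \<open>A \<noteq> {}\<close>]
          tangent_envelope_eq_qf(1)[OF A \<open>a0 \<in> A\<close>] qf_le_tangent_envelope[OF max]] by blast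
    have below: "norm (e - d) ^ 2 / 2 + qf bf (e - d) \<le> qf bf (a - e)" if "a \<in> A" for a
      using e tangent_envelope_eq_qf[OF A that] by fastforce
    then have "e \<in> A"
      using half_norm_square_add_qf_nonneg[of "e - d"] by (intro max_q_positive_memI[OF max]) force
    then have "e - d \<in> Nq bf g0"
      using below[of e] qf_zero unfolding mem_Nq_g0_iff by simp
    then show ?thesis using \<open>e \<in> A\<close> unfolding mdiff_def by force
  qed
  then show ?thesis by blast
qed

end

theorem theorem4p4:
  fixes bf :: "'b::banach \<Rightarrow> 'b \<Rightarrow> real"
  assumes "SSDB bf"
  shows "(\<forall>f. BC_function bf f \<longrightarrow> mdiff (Pq bf f) (Nq bf g0) = UNIV)
    \<and> (\<forall>A. q_positive bf A \<and> mdiff A (Nq bf g0) = UNIV \<longrightarrow> max_q_positive bf A)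
    \<and> (\<forall>f. BC_function bf f \<longrightarrow>
           max_q_positive bf (Pq bf f) \<and> Pq bf (fconj bf f) = Pq bf f)
    \<and> (\<forall>A. q_positive bf A \<longrightarrow> (max_q_positive bf A \<longleftrightarrow> mdiff A (Nq bf g0) = UNIV))"
proof -
  interpret ssdb bf by (rule ssdb.intro) fact
  show ?thesis
  proof (intro conjI allI impI)
    fix f assume BC: "BC_function bf f"
    show "mdiff (Pq bf f) (Nq bf g0) = UNIV" using BC_function_mdiff_Pq_Nq[OF BC] .
    show "max_q_positive bf (Pq bf f)"
      using max_q_positive_if_mdiff_Nq BC_function_Pq_q_positive[OF BC] BC_function_mdiff_Pq_Nq[OF BC] .
    show "Pq bf (fconj bf f) = Pq bf f" using BC_function_Pq_fconj[OF BC] .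
  next
    fix A assume "q_positive bf A \<and> mdiff A (Nq bf g0) = UNIV"
    then show "max_q_positive bf A" using max_q_positive_if_mdiff_Nq by blast
  next
    fix A assume "q_positive bf A"
    then show "max_q_positive bf A \<longleftrightarrow> mdiff A (Nq bf g0) = UNIV"
      using max_q_positive_if_mdiff_Nq max_q_positive_mdiff_Nq by blast
  qed
qed

end
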